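(* Let $1 \le s \le r$ be fixed integers and let $n \ge r$. Let $H_1, H_2, \ldots$ be independent, each uniformly distributed over the $r$-element subsets of $[n] = \{1, \ldots, n\}$. An $s$-element subset $S \subseteq [n]$ is said to be collected by time $k$ if $S \subseteq H_t$ for some $t \le k$. Let $T^{(r,s)}$ be the smallest $k$ such that all $\binom{n}{s}$ $s$-element subsets of $[n]$ have been collected by time $k$. Then, as $n \to \infty$, \[ \frac{T^{(r,s)} - \binom{n}{s}\log\binom{n}{s}\big/\binom{r}{s}}{\binom{n}{s}\big/\binom{r}{s}} \] converges weakly to a standard Gumbel distribution, i.e. the distribution with cumulative distribution function $x \mapsto e^{-e^{-x}}$.
   Context: In each round $t$ one draws $r$ distinct coupons uniformly at random (without replacement) from $[n]$, independently across rounds; all $s$-subsets of the drawn $r$-set are marked as collected. *)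

theory Defs
  imports "HOL-Probability.Probability"
begin

definition r_subsets :: "nat \<Rightarrow> nat \<Rightarrow> nat set set" where
  "r_subsets n r = {A. A \<subseteq> {1..n} \<and> card A = r}"

text \<open>Given the draws H 0, ..., H (k-1) (rounds 1..k), every s-subset of [n] is collected by time k.\<close>
definition all_collected_by :: "nat \<Rightarrow> nat \<Rightarrow> nat \<Rightarrow> (nat \<Rightarrow> nat set) \<Rightarrow> bool" where
  "all_collected_by n s k H = (\<forall>S. S \<subseteq> {1..n} \<and> card S = s \<longrightarrow> (\<exists>t<k. S \<subseteq> H t))"

definition rounds_pmf :: "nat \<Rightarrow> nat \<Rightarrow> nat \<Rightarrow> (nat \<Rightarrow> nat set) pmf" where
  "rounds_pmf n r k = Pi_pmf {..<k} {} (\<lambda>_. pmf_of_set (r_subsets n r))"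

definition prob_T_le :: "nat \<Rightarrow> nat \<Rightarrow> nat \<Rightarrow> nat \<Rightarrow> real" where
  "prob_T_le n r s k = measure_pmf.prob (rounds_pmf n r k) {H. all_collected_by n s k H}"

text \<open>CDF of the normalised variable (T - a_n)/b_n, with b_n = C(n,s)/C(r,s), a_n = b_n log C(n,s).
  Since T is integer valued and T \<ge> 1 (there are s-subsets), P(T \<le> y) = P(T \<le> nat (floor y)).\<close>
definition T_norm_cdf :: "nat \<Rightarrow> nat \<Rightarrow> nat \<Rightarrow> real \<Rightarrow> real" where
  "T_norm_cdf r s n x =
     (let b = real (n choose s) / real (r choose s);
          a = b * ln (real (n choose s))
      in prob_T_le n r s (nat \<lfloor>a + b * x\<rfloor>))"

definition gumbel_cdf :: "real \<Rightarrow> real" where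
  "gumbel_cdf x = exp (- exp (- x))"

end

theory Submission
  imports Defs "HOL-Real_Asymp.Real_Asymp"
begin

(* Let U be the number of s-sets not yet collected after k rounds, so that P(T <= k) = P(U = 0).
  By the Bonferroni inequalities this probability lies between consecutive partial sums of
  sum_j (-1)^j E[C(U, j)], and E[C(U, j)] is the sum, over all families F of j distinct s-sets,
  of (1 - q_F)^k, where q_F is the probability that a single round covers some member of F.
  Inclusion-exclusion to second order gives j p (1 - j d) <= q_F <= j p, where p = C(r,s)/C(n,s)
  is the probability of covering a fixed s-set and d = (r-s)/(n-s); since d ln C(n,s) -> 0, at
  k = (ln C(n,s) + x)/p the j-th binomial moment tends to e^(-jx)/j!, the j-th term of the
  exponential series of exp(-e^(-x)). *)

section \<open>Bonferroni inequalities\<close>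

lemma card_UN_ge_sum_minus_pairs:
  assumes "finite I" "\<And>i. i \<in> I \<Longrightarrow> finite (A i)"
  shows "(\<Sum>i\<in>I. real (card (A i))) - (\<Sum>i\<in>I. \<Sum>i'\<in>I - {i}. real (card (A i \<inter> A i')))
           \<le> real (card (\<Union>i\<in>I. A i))"
  using assms
proof (induction I rule: finite_induct)
  case empty
  then show ?case by simp
next
  case (insert a I)
  define U where "U = (\<Union>i\<in>I. A i)"
  have fin: "finite (A a)" "finite U"
    using insert by (auto simp: U_def)
  have IH: "(\<Sum>i\<in>I. real (card (A i))) - (\<Sum>i\<in>I. \<Sum>i'\<in>I - {i}. real (card (A i \<inter> A i')))
              \<le> real (card U)"
    using insert by (simp add: U_def)
  have "card (A a \<inter> U) \<le> (\<Sum>i\<in>I. card (A a \<inter> A i))"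
    unfolding U_def Int_UN_distrib using card_UN_le[OF insert(1)] .
  then have overlap: "real (card (A a \<inter> U)) \<le> (\<Sum>i\<in>I. real (card (A a \<inter> A i)))"
    by (simp flip: of_nat_sum)
  have pairs: "(\<Sum>i\<in>insert a I. \<Sum>i'\<in>insert a I - {i}. real (card (A i \<inter> A i')))
      \<ge> (\<Sum>i\<in>I. real (card (A a \<inter> A i))) + (\<Sum>i\<in>I. \<Sum>i'\<in>I - {i}. real (card (A i \<inter> A i')))"
  proof -
    have "(\<Sum>i\<in>I. \<Sum>i'\<in>I - {i}. real (card (A i \<inter> A i')))
        \<le> (\<Sum>i\<in>I. \<Sum>i'\<in>insert a I - {i}. real (card (A i \<inter> A i')))"
      using insert(1) by (intro sum_mono sum_mono2) auto
    then show ?thesis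
      using insert(1,2) by (simp add: insert_Diff_if)
  qed
  have "real (card (A a \<union> U)) = real (card (A a)) + real (card U) - real (card (A a \<inter> U))"
    using card_Un_Int[OF fin] by simp
  then show ?case
    using IH overlap pairs insert(1,2) by (simp add: U_def)
qed

lemma alternating_choose_partial_sum:
  "(\<Sum>j\<le>J. (-1) ^ j * real (m choose j)) = (if m = 0 then 1 else (-1) ^ J * real ((m - 1) choose J))"
proof -
  have "(\<Sum>j\<le>J. (-1) ^ j * real (m choose j)) = (-1) ^ J * (real m - 1 gchoose J)"
    using gbinomial_sum_lower_neg[of "real m" J] by (simp add: binomial_gbinomial mult.commute)
  also have "\<dots> = (if m = 0 then 1 else (-1) ^ J * real ((m - 1) choose J))"
  proof (cases "m = 0")
    case True
    have "(-1 gchoose J :: real) = (-1) ^ J * (real J gchoose J)"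
      using gbinomial_negated_upper[of "-1 :: real" J] by simp
    then show ?thesis
      using True by (simp flip: binomial_gbinomial power_add mult_2)
  qed (simp add: binomial_gbinomial of_nat_diff)
  finally show ?thesis .
qed

lemma Bonferroni_prob_eq_0:
  fixes M :: "'a pmf" and X :: "'a \<Rightarrow> nat"
  assumes "finite (set_pmf M)"
  shows "(\<Sum>j\<le>2 * L + 1. (-1) ^ j * measure_pmf.expectation M (\<lambda>\<omega>. real (X \<omega> choose j)))
           \<le> measure_pmf.prob M {\<omega>. X \<omega> = 0}"
    and "measure_pmf.prob M {\<omega>. X \<omega> = 0}
           \<le> (\<Sum>j\<le>2 * L. (-1) ^ j * measure_pmf.expectation M (\<lambda>\<omega>. real (X \<omega> choose j)))"
proof -
  have partial_sum: "(\<Sum>j\<le>J. (-1) ^ j * measure_pmf.expectation M (\<lambda>\<omega>. real (X \<omega> choose j)))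
      = measure_pmf.expectation M (\<lambda>\<omega>. \<Sum>j\<le>J. (-1) ^ j * real (X \<omega> choose j))" for J
    using assms by (simp add: integrable_measure_pmf_finite)
  have prob: "measure_pmf.prob M {\<omega>. X \<omega> = 0} = measure_pmf.expectation M (indicator {\<omega>. X \<omega> = 0})"
    by simp
  show "(\<Sum>j\<le>2 * L + 1. (-1) ^ j * measure_pmf.expectation M (\<lambda>\<omega>. real (X \<omega> choose j)))
           \<le> measure_pmf.prob M {\<omega>. X \<omega> = 0}"
    unfolding partial_sum prob using assms
    by (intro integral_mono)
      (auto simp: integrable_measure_pmf_finite alternating_choose_partial_sum indicator_def)
  show "measure_pmf.prob M {\<omega>. X \<omega> = 0}
           \<le> (\<Sum>j\<le>2 * L. (-1) ^ j * measure_pmf.expectation M (\<lambda>\<omega>. real (X \<omega> choose j)))"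
    unfolding partial_sum prob using assms
    by (intro integral_mono)
      (auto simp: integrable_measure_pmf_finite alternating_choose_partial_sum indicator_def)
qed

lemma tendsto_between_alternating_partial_sums:
  fixes P :: "nat \<Rightarrow> real" and S :: "nat \<Rightarrow> nat \<Rightarrow> real"
  assumes lower: "\<And>L. \<forall>\<^sub>F n in sequentially. (\<Sum>j\<le>2 * L + 1. (-1) ^ j * S n j) \<le> P n"
    and upper: "\<And>L. \<forall>\<^sub>F n in sequentially. P n \<le> (\<Sum>j\<le>2 * L. (-1) ^ j * S n j)"
    and lim: "\<And>j. (\<lambda>n. S n j) \<longlonglongrightarrow> a j"
    and sums: "(\<lambda>j. (-1) ^ j * a j) sums G"
  shows "P \<longlonglongrightarrow> G"
proof (rule tendstoI)
  fix \<epsilon> :: real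
  assume "\<epsilon> > 0"
  then obtain M where M: "\<And>J. J \<ge> M \<Longrightarrow> \<bar>(\<Sum>j\<le>J. (-1) ^ j * a j) - G\<bar> < \<epsilon> / 2"
    using sums unfolding sums_def_le LIMSEQ_def dist_real_def by (meson half_gt_zero)
  have partial_lim: "(\<lambda>n. \<Sum>j\<le>J. (-1) ^ j * S n j) \<longlonglongrightarrow> (\<Sum>j\<le>J. (-1) ^ j * a j)" for J
    by (intro tendsto_intros lim)
  have "\<forall>\<^sub>F n in sequentially.
      (\<Sum>j\<le>2 * M. (-1) ^ j * S n j) < (\<Sum>j\<le>2 * M. (-1) ^ j * a j) + \<epsilon> / 2"
    using \<open>\<epsilon> > 0\<close> by (intro order_tendstoD(2)[OF partial_lim]) simp
  moreover have "\<forall>\<^sub>F n in sequentially.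
      (\<Sum>j\<le>2 * M + 1. (-1) ^ j * a j) - \<epsilon> / 2 < (\<Sum>j\<le>2 * M + 1. (-1) ^ j * S n j)"
    using \<open>\<epsilon> > 0\<close> by (intro order_tendstoD(1)[OF partial_lim]) simp
  ultimately show "\<forall>\<^sub>F n in sequentially. dist (P n) G < \<epsilon>"
    using lower[of M] upper[of M]
  proof eventually_elim
    case (elim n)
    moreover have "\<bar>(\<Sum>j\<le>2 * M. (-1) ^ j * a j) - G\<bar> < \<epsilon> / 2"
      "\<bar>(\<Sum>j\<le>2 * M + 1. (-1) ^ j * a j) - G\<bar> < \<epsilon> / 2"
      using M[of "2 * M"] M[of "2 * M + 1"] by simp_all
    ultimately show ?case
      unfolding dist_real_def by arith
  qed
qed

section \<open>Subsets of a given size and the sets covering them\<close>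

lemma finite_r_subsets: "finite (r_subsets n r)"
  unfolding r_subsets_def by (rule finite_subset[of _ "Pow {1..n}"]) auto

lemma card_r_subsets: "card (r_subsets n r) = n choose r"
  unfolding r_subsets_def using n_subsets[of "{1..n}" r] by simp

lemma r_subsets_nonempty: "r \<le> n \<Longrightarrow> r_subsets n r \<noteq> {}"
  unfolding r_subsets_def by (auto intro!: exI[of _ "{1..r}"])

lemma card_r_subsets_supersets:
  assumes "T \<in> r_subsets n t" "t \<le> r"
  shows "card {A \<in> r_subsets n r. T \<subseteq> A} = (n - t) choose (r - t)"
proof -
  have T: "T \<subseteq> {1..n}" "card T \<le> r" and t: "t = card T"
    using assms by (auto simp: r_subsets_def)
  have fin: "finite T" using T(1) finite_subset by blast
  have "bij_betw (\<lambda>B. B \<union> T) {B. B \<subseteq> {1..n} - T \<and> card B = r - card T}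
          {A \<in> r_subsets n r. T \<subseteq> A}"
  proof (rule bij_betw_byWitness[where f' = "\<lambda>A. A - T"])
    show "(\<lambda>B. B \<union> T) ` {B. B \<subseteq> {1..n} - T \<and> card B = r - card T} \<subseteq> {A \<in> r_subsets n r. T \<subseteq> A}"
    proof (intro image_subsetI CollectI conjI)
      fix B assume B: "B \<in> {B. B \<subseteq> {1..n} - T \<and> card B = r - card T}"
      then have "finite B" "B \<inter> T = {}" using finite_subset by auto
      with B T fin show "B \<union> T \<in> r_subsets n r"
        by (auto simp: r_subsets_def card_Un_disjoint)
    qed auto
    show "(\<lambda>A. A - T) ` {A \<in> r_subsets n r. T \<subseteq> A} \<subseteq> {B. B \<subseteq> {1..n} - T \<and> card B = r - card T}"
      using fin by (auto simp: r_subsets_def card_Diff_subset)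
  qed auto
  then have "card {A \<in> r_subsets n r. T \<subseteq> A} = card {B. B \<subseteq> {1..n} - T \<and> card B = r - card T}"
    by (simp add: bij_betw_same_card)
  also have "\<dots> = card ({1..n} - T) choose (r - card T)"
    by (simp add: n_subsets)
  also have "card ({1..n} - T) = n - card T"
    using T fin by (simp add: card_Diff_subset)
  finally show ?thesis
    unfolding t .
qed

lemma card_r_subsets_supersets_of_two:
  assumes S: "S \<in> r_subsets n s" "S' \<in> r_subsets n s" "S \<noteq> S'" and "s \<le> r" "r \<le> n"
  shows "card {A \<in> r_subsets n r. S \<union> S' \<subseteq> A} * (n - s) \<le> ((n - s) choose (r - s)) * (r - s)"
proof -
  have card_S: "card S = s" "card S' = s" and fin: "finite S"
    using S finite_subset[of S "{1..n}"] by (auto simp: r_subsets_def)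
  have "\<not> S' \<subseteq> S"
    using S(3) card_S fin card_subset_eq[of S S'] by auto
  then obtain y where y: "y \<in> S'" "y \<notin> S"
    by blast
  define T where "T = insert y S"
  have T: "T \<in> r_subsets n (Suc s)"
    using S y fin by (auto simp: T_def r_subsets_def)
  have card_le: "card {A \<in> r_subsets n r. S \<union> S' \<subseteq> A} \<le> card {A \<in> r_subsets n r. T \<subseteq> A}"
    using y finite_r_subsets by (intro card_mono) (auto simp: T_def)
  show ?thesis
  proof (cases "s < r")
    case True
    have diffs: "n - s = Suc (n - Suc s)" "r - s = Suc (r - Suc s)"
      using True \<open>r \<le> n\<close> by auto
    have "card {A \<in> r_subsets n r. S \<union> S' \<subseteq> A} * (n - s) \<le> card {A \<in> r_subsets n r. T \<subseteq> A} * (n - s)"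
      using card_le by (rule mult_le_mono1)
    also have "\<dots> = (n - s) * ((n - Suc s) choose (r - Suc s))"
      using T True by (simp add: card_r_subsets_supersets)
    also have "\<dots> = ((n - s) choose (r - s)) * (r - s)"
      unfolding diffs by (rule Suc_times_binomial_eq)
    finally show ?thesis .
  next
    case False
    have "\<not> T \<subseteq> A" if "A \<in> r_subsets n r" for A
      using that T False card_mono[of A T] finite_subset[of A "{1..n}"] by (auto simp: r_subsets_def)
    then have "card {A \<in> r_subsets n r. T \<subseteq> A} = 0"
      by (metis (mono_tags, lifting) card.empty empty_Collect_eq)
    then show ?thesis
      using card_le by (metis le_zero_eq mult_zero_left zero_le)
  qed
qed

definition covering_sets :: "nat \<Rightarrow> nat \<Rightarrow> nat set set \<Rightarrow> nat set set" where
  "covering_sets n r F = {A \<in> r_subsets n r. \<exists>S\<in>F. S \<subseteq> A}"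

lemma card_covering_sets_le:
  assumes "F \<subseteq> r_subsets n s" "s \<le> r"
  shows "card (covering_sets n r F) \<le> card F * ((n - s) choose (r - s))"
proof -
  have "covering_sets n r F = (\<Union>S\<in>F. {A \<in> r_subsets n r. S \<subseteq> A})"
    by (auto simp: covering_sets_def)
  also have "card \<dots> \<le> (\<Sum>S\<in>F. card {A \<in> r_subsets n r. S \<subseteq> A})"
    using assms(1) finite_r_subsets finite_subset by (intro card_UN_le) blast
  also have "\<dots> = (\<Sum>S\<in>F. (n - s) choose (r - s))"
    using assms by (intro sum.cong) (auto simp: card_r_subsets_supersets)
  also have "\<dots> = card F * ((n - s) choose (r - s))"
    by simp
  finally show ?thesis .
qed

lemma card_covering_sets_ge:
  assumes F: "F \<subseteq> r_subsets n s" and "s \<le> r" "r \<le> n" "s < n"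
  defines "C \<equiv> real ((n - s) choose (r - s))"
  shows "real (card F) * C - real (card F) ^ 2 * C * ((real r - real s) / (real n - real s))
           \<le> real (card (covering_sets n r F))"
proof -
  define A where "A S = {A \<in> r_subsets n r. S \<subseteq> A}" for S
  have fin: "finite F"
    using F finite_r_subsets finite_subset by blast
  have card_A: "real (card (A S)) = C" if "S \<in> F" for S
    using that F assms(2) by (auto simp: A_def C_def card_r_subsets_supersets)
  have pair: "real (card (A S \<inter> A S')) \<le> C * ((real r - real s) / (real n - real s))"
    if "S \<in> F" "S' \<in> F - {S}" for S S'
  proof -
    have "A S \<inter> A S' = {A \<in> r_subsets n r. S \<union> S' \<subseteq> A}"
      by (auto simp: A_def)
    moreover have "card {A \<in> r_subsets n r. S \<union> S' \<subseteq> A} * (n - s) \<le> ((n - s) choose (r - s)) * (r - s)"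
      using that F assms(2,3) by (intro card_r_subsets_supersets_of_two) auto
    ultimately have "card (A S \<inter> A S') * (n - s) \<le> ((n - s) choose (r - s)) * (r - s)"
      by (simp only:)
    then have "real (card (A S \<inter> A S')) * (real n - real s) \<le> C * (real r - real s)"
      using assms(2,4) unfolding C_def by (metis of_nat_diff of_nat_le_iff of_nat_mult less_imp_le)
    then show ?thesis
      using assms(4) by (simp add: field_simps)
  qed
  have "(\<Sum>S\<in>F. \<Sum>S'\<in>F - {S}. real (card (A S \<inter> A S')))
      \<le> (\<Sum>S\<in>F. \<Sum>S'\<in>F - {S}. C * ((real r - real s) / (real n - real s)))"
    using pair by (intro sum_mono) auto
  also have "\<dots> \<le> (\<Sum>S\<in>F. \<Sum>S'\<in>F. C * ((real r - real s) / (real n - real s)))"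
    using fin assms(2,4) by (intro sum_mono sum_mono2) (auto simp: C_def)
  also have "\<dots> = real (card F) ^ 2 * C * ((real r - real s) / (real n - real s))"
    by (simp add: power2_eq_square)
  finally have "real (card F) * C - real (card F) ^ 2 * C * ((real r - real s) / (real n - real s))
      \<le> (\<Sum>S\<in>F. real (card (A S))) - (\<Sum>S\<in>F. \<Sum>S'\<in>F - {S}. real (card (A S \<inter> A S')))"
    using card_A by simp
  also have "\<dots> \<le> real (card (\<Union>S\<in>F. A S))"
    using fin finite_r_subsets by (intro card_UN_ge_sum_minus_pairs) (auto simp: A_def)
  also have "(\<Union>S\<in>F. A S) = covering_sets n r F"
    by (auto simp: A_def covering_sets_def)
  finally show ?thesis .
qed

lemma covering_sets_fraction_bounds:
  assumes F: "F \<subseteq> r_subsets n s" and "s \<le> r" "r \<le> n" "s < n"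
  defines "p \<equiv> real (r choose s) / real (n choose s)"
    and "d \<equiv> (real r - real s) / (real n - real s)"
  shows "real (card F) * p * (1 - real (card F) * d)
           \<le> real (card (covering_sets n r F)) / real (n choose r)"
    and "real (card (covering_sets n r F)) / real (n choose r) \<le> real (card F) * p"
proof -
  have pos: "real (n choose r) > 0"
    using assms(3) by simp
  have "real (n choose r) * real (r choose s) = real (n choose s) * real ((n - s) choose (r - s))"
    using choose_mult[OF assms(2,3)] by (metis of_nat_mult)
  then have C: "real ((n - s) choose (r - s)) = p * real (n choose r)"
    using assms(2,3) by (simp add: p_def field_simps)
  have "real (card F) * p * (1 - real (card F) * d) * real (n choose r)
      = real (card F) * real ((n - s) choose (r - s))
        - real (card F) ^ 2 * real ((n - s) choose (r - s)) * d"
    unfolding C by (simp add: algebra_simps power2_eq_square)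
  also have "\<dots> \<le> real (card (covering_sets n r F))"
    using card_covering_sets_ge[OF assms(1-4)] by (simp add: d_def)
  finally show "real (card F) * p * (1 - real (card F) * d)
      \<le> real (card (covering_sets n r F)) / real (n choose r)"
    using pos by (simp add: pos_le_divide_eq)
  have "real (card (covering_sets n r F)) \<le> real (card F) * real ((n - s) choose (r - s))"
    using card_covering_sets_le[OF assms(1,2)] by (simp flip: of_nat_mult)
  also have "\<dots> = real (card F) * p * real (n choose r)"
    by (simp add: C)
  finally show "real (card (covering_sets n r F)) / real (n choose r) \<le> real (card F) * p"
    using pos by (simp add: pos_divide_le_eq)
qed

section \<open>Binomial moments of the number of uncollected sets\<close>

definition uncollected :: "nat \<Rightarrow> nat \<Rightarrow> nat \<Rightarrow> (nat \<Rightarrow> nat set) \<Rightarrow> nat set set" where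
  "uncollected n s k H = {S \<in> r_subsets n s. \<forall>t<k. \<not> S \<subseteq> H t}"

lemma finite_uncollected: "finite (uncollected n s k H)"
  unfolding uncollected_def using finite_r_subsets by simp

lemma all_collected_by_iff_card_uncollected:
  "all_collected_by n s k H \<longleftrightarrow> card (uncollected n s k H) = 0"
  by (auto simp: all_collected_by_def uncollected_def r_subsets_def finite_uncollected)

lemma finite_set_pmf_rounds_pmf:
  assumes "r \<le> n"
  shows "finite (set_pmf (rounds_pmf n r k))"
proof (rule finite_subset)
  show "set_pmf (rounds_pmf n r k) \<subseteq> PiE_dflt {..<k} {} (\<lambda>_. r_subsets n r)"
    using set_Pi_pmf_subset'[of "{..<k}" "{}" "\<lambda>_. pmf_of_set (r_subsets n r)"]
      r_subsets_nonempty[OF assms] finite_r_subsets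
    by (simp add: rounds_pmf_def o_def)
qed (auto simp: finite_r_subsets)

lemma prob_rounds_pmf_all_in:
  "measure_pmf.prob (rounds_pmf n r k) {H. \<forall>t<k. H t \<in> G}
     = measure_pmf.prob (pmf_of_set (r_subsets n r)) G ^ k"
proof -
  have "{H. \<forall>t<k. H t \<in> G} = Pi {..<k} (\<lambda>_. G)"
    by (auto simp: Pi_def)
  then show ?thesis
    by (simp add: rounds_pmf_def measure_Pi_pmf_Pi)
qed

lemma prob_round_avoids:
  assumes "r \<le> n"
  shows "measure_pmf.prob (pmf_of_set (r_subsets n r)) {A. \<forall>S\<in>F. \<not> S \<subseteq> A}
           = 1 - real (card (covering_sets n r F)) / real (n choose r)"
proof -
  have sub: "covering_sets n r F \<subseteq> r_subsets n r"
    by (auto simp: covering_sets_def)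
  have "card (r_subsets n r \<inter> {A. \<forall>S\<in>F. \<not> S \<subseteq> A}) = card (r_subsets n r - covering_sets n r F)"
    by (rule arg_cong[of _ _ card]) (auto simp: covering_sets_def)
  also have "\<dots> = (n choose r) - card (covering_sets n r F)"
    using sub finite_r_subsets by (simp add: card_Diff_subset finite_subset card_r_subsets)
  finally have "measure_pmf.prob (pmf_of_set (r_subsets n r)) {A. \<forall>S\<in>F. \<not> S \<subseteq> A}
      = real ((n choose r) - card (covering_sets n r F)) / real (n choose r)"
    using r_subsets_nonempty[OF assms] finite_r_subsets by (simp add: measure_pmf_of_set card_r_subsets)
  moreover have "card (covering_sets n r F) \<le> n choose r"
    using card_mono[OF finite_r_subsets sub] by (simp add: card_r_subsets)
  moreover have "n choose r > 0"
    using assms by simp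
  ultimately show ?thesis
    by (simp add: of_nat_diff diff_divide_distrib)
qed

lemma expectation_choose_card_uncollected:
  assumes "r \<le> n"
  shows "measure_pmf.expectation (rounds_pmf n r k) (\<lambda>H. real (card (uncollected n s k H) choose j))
    = (\<Sum>F | F \<subseteq> r_subsets n s \<and> card F = j.
         (1 - real (card (covering_sets n r F)) / real (n choose r)) ^ k)"
proof -
  let ?M = "rounds_pmf n r k" and ?Fam = "{F. F \<subseteq> r_subsets n s \<and> card F = j}"
  have fin_Fam: "finite ?Fam"
    by (rule finite_subset[of _ "Pow (r_subsets n s)"]) (auto simp: finite_r_subsets)
  have "real (card (uncollected n s k H) choose j)
      = (\<Sum>F\<in>?Fam. indicator {H. \<forall>t<k. H t \<in> {A. \<forall>S\<in>F. \<not> S \<subseteq> A}} H)" for H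
  proof -
    have "card (uncollected n s k H) choose j = card {F. F \<subseteq> uncollected n s k H \<and> card F = j}"
      by (simp add: n_subsets finite_uncollected)
    also have "{F. F \<subseteq> uncollected n s k H \<and> card F = j}
        = {F \<in> ?Fam. \<forall>t<k. H t \<in> {A. \<forall>S\<in>F. \<not> S \<subseteq> A}}"
      by (auto simp: uncollected_def)
    finally show ?thesis
      using fin_Fam by (simp add: indicator_def sum.If_cases Int_def)
  qed
  then have "measure_pmf.expectation ?M (\<lambda>H. real (card (uncollected n s k H) choose j))
      = (\<Sum>F\<in>?Fam. measure_pmf.prob ?M {H. \<forall>t<k. H t \<in> {A. \<forall>S\<in>F. \<not> S \<subseteq> A}})"
    using finite_set_pmf_rounds_pmf[OF assms]
    by (simp add: Bochner_Integration.integral_sum integrable_measure_pmf_finite)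
  then show ?thesis
    by (simp only: prob_rounds_pmf_all_in prob_round_avoids[OF assms])
qed

lemma expectation_choose_card_uncollected_bounds:
  assumes "s \<le> r" "r \<le> n" "s < n"
  defines "p \<equiv> real (r choose s) / real (n choose s)"
    and "d \<equiv> (real r - real s) / (real n - real s)"
  assumes jp: "real j * p \<le> 1"
  shows "real ((n choose s) choose j) * (1 - real j * p) ^ k
           \<le> measure_pmf.expectation (rounds_pmf n r k) (\<lambda>H. real (card (uncollected n s k H) choose j))"
    and "measure_pmf.expectation (rounds_pmf n r k) (\<lambda>H. real (card (uncollected n s k H) choose j))
           \<le> real ((n choose s) choose j) * (1 - real j * p * (1 - real j * d)) ^ k"
proof -
  let ?Fam = "{F. F \<subseteq> r_subsets n s \<and> card F = j}"
  let ?q = "\<lambda>F. real (card (covering_sets n r F)) / real (n choose r)"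
  have card_Fam: "card ?Fam = (n choose s) choose j"
    by (simp add: n_subsets finite_r_subsets card_r_subsets)
  have q: "real j * p * (1 - real j * d) \<le> ?q F" "?q F \<le> real j * p" if "F \<in> ?Fam" for F
    using that covering_sets_fraction_bounds[of F n s r] assms(1-3) by (auto simp: p_def d_def)
  have q_le_1: "0 \<le> 1 - ?q F" for F
    using measure_nonneg[of "measure_pmf (pmf_of_set (r_subsets n r))" "{A. \<forall>S\<in>F. \<not> S \<subseteq> A}"]
    unfolding prob_round_avoids[OF assms(2)] .
  have "(\<Sum>F\<in>?Fam. (1 - real j * p) ^ k) \<le> (\<Sum>F\<in>?Fam. (1 - ?q F) ^ k)"
    using q jp by (intro sum_mono power_mono) auto
  then show "real ((n choose s) choose j) * (1 - real j * p) ^ k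
      \<le> measure_pmf.expectation (rounds_pmf n r k) (\<lambda>H. real (card (uncollected n s k H) choose j))"
    by (simp add: card_Fam expectation_choose_card_uncollected[OF assms(2)])
  have "(\<Sum>F\<in>?Fam. (1 - ?q F) ^ k) \<le> (\<Sum>F\<in>?Fam. (1 - real j * p * (1 - real j * d)) ^ k)"
    using q q_le_1 by (intro sum_mono power_mono) auto
  then show "measure_pmf.expectation (rounds_pmf n r k) (\<lambda>H. real (card (uncollected n s k H) choose j))
      \<le> real ((n choose s) choose j) * (1 - real j * p * (1 - real j * d)) ^ k"
    by (simp add: card_Fam expectation_choose_card_uncollected[OF assms(2)])
qed

section \<open>Asymptotics of the binomial moments\<close>

lemma power_one_minus_times_exp_tendsto:
  fixes q y :: "nat \<Rightarrow> real" and k :: "nat \<Rightarrow> nat"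
  assumes q: "q \<longlonglongrightarrow> 0" "\<forall>\<^sub>F n in sequentially. 0 \<le> q n"
    and lin: "(\<lambda>n. k n * q n - y n) \<longlonglongrightarrow> 0" and quad: "(\<lambda>n. k n * q n ^ 2) \<longlonglongrightarrow> 0"
  shows "(\<lambda>n. (1 - q n) ^ k n * exp (y n)) \<longlonglongrightarrow> 1"
proof -
  have "\<forall>\<^sub>F n in sequentially. q n < 1/2"
    using q(1) by (rule order_tendstoD) simp
  with q(2) have small: "\<forall>\<^sub>F n in sequentially. 0 \<le> q n \<and> q n \<le> 1/2"
    by eventually_elim auto
  have log_lim: "(\<lambda>n. k n * ln (1 - q n) + y n) \<longlonglongrightarrow> 0"
  proof (rule tendsto_sandwich)
    show "\<forall>\<^sub>F n in sequentially. - (k n * q n - y n) - 2 * (k n * q n ^ 2) \<le> k n * ln (1 - q n) + y n"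
      using small
    proof eventually_elim
      case (elim n)
      then have "k n * (- q n - 2 * q n ^ 2) \<le> k n * ln (1 - q n)"
        by (intro mult_left_mono ln_one_minus_pos_lower_bound) auto
      then show ?case
        by (simp add: algebra_simps)
    qed
    show "\<forall>\<^sub>F n in sequentially. k n * ln (1 - q n) + y n \<le> - (k n * q n - y n)"
      using small
    proof eventually_elim
      case (elim n)
      then have "k n * ln (1 - q n) \<le> k n * (- q n)"
        by (intro mult_left_mono ln_one_minus_pos_upper_bound) auto
      then show ?case
        by (simp add: algebra_simps)
    qed
    show "(\<lambda>n. - (k n * q n - y n) - 2 * (k n * q n ^ 2)) \<longlonglongrightarrow> 0"
      using tendsto_diff[OF tendsto_minus[OF lin] tendsto_mult_left[OF quad, of 2]] by simp
    show "(\<lambda>n. - (k n * q n - y n)) \<longlonglongrightarrow> 0"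
      using tendsto_minus[OF lin] by simp
  qed
  have "\<forall>\<^sub>F n in sequentially. exp (k n * ln (1 - q n) + y n) = (1 - q n) ^ k n * exp (y n)"
    using small by eventually_elim (simp add: exp_add exp_of_nat_mult)
  then show ?thesis
    using tendsto_exp[OF log_lim] by (simp add: tendsto_cong)
qed

lemma nat_floor_div_times_tendsto:
  fixes L p :: "nat \<Rightarrow> real"
  assumes "p \<longlonglongrightarrow> 0" "\<forall>\<^sub>F n in sequentially. 0 < p n \<and> 0 \<le> L n"
  shows "(\<lambda>n. nat \<lfloor>L n / p n\<rfloor> * p n - L n) \<longlonglongrightarrow> 0"
proof (rule tendsto_sandwich)
  show "\<forall>\<^sub>F n in sequentially. - p n \<le> nat \<lfloor>L n / p n\<rfloor> * p n - L n"
    using assms(2)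
  proof eventually_elim
    case (elim n)
    then have "L n / p n - 1 \<le> nat \<lfloor>L n / p n\<rfloor>"
      by linarith
    then have "(L n / p n - 1) * p n \<le> nat \<lfloor>L n / p n\<rfloor> * p n"
      using elim by (intro mult_right_mono) auto
    then show ?case
      using elim by (simp add: algebra_simps)
  qed
  show "\<forall>\<^sub>F n in sequentially. nat \<lfloor>L n / p n\<rfloor> * p n - L n \<le> 0"
    using assms(2)
  proof eventually_elim
    case (elim n)
    then have "nat \<lfloor>L n / p n\<rfloor> * p n \<le> L n / p n * p n"
      by (intro mult_right_mono) auto
    then show ?case
      using elim by simp
  qed
  show "(\<lambda>n. - p n) \<longlonglongrightarrow> 0"
    using tendsto_minus[OF assms(1)] by simp
qed simp

lemma power_floor_div_times_exp_tendsto: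
  fixes p L e :: "nat \<Rightarrow> real" and j :: nat
  assumes p: "p \<longlonglongrightarrow> 0" "(\<lambda>n. p n * L n) \<longlonglongrightarrow> 0"
    and e: "e \<longlonglongrightarrow> 0" "(\<lambda>n. e n * L n) \<longlonglongrightarrow> 0"
    and pos: "\<forall>\<^sub>F n in sequentially. 0 < p n \<and> 0 \<le> L n"
  shows "(\<lambda>n. (1 - j * p n * (1 - e n)) ^ nat \<lfloor>L n / p n\<rfloor> * exp (j * L n)) \<longlonglongrightarrow> 1"
proof (rule power_one_minus_times_exp_tendsto)
  define k where "k n = nat \<lfloor>L n / p n\<rfloor>" for n
  have kp: "(\<lambda>n. k n * p n - L n) \<longlonglongrightarrow> 0"
    unfolding k_def using p(1) pos by (rule nat_floor_div_times_tendsto)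
  show "(\<lambda>n. j * p n * (1 - e n)) \<longlonglongrightarrow> 0"
    using tendsto_mult[OF tendsto_mult_left[OF p(1)] tendsto_diff[OF tendsto_const e(1)]] by simp
  have "\<forall>\<^sub>F n in sequentially. e n < 1"
    using e(1) by (rule order_tendstoD) simp
  with pos show "\<forall>\<^sub>F n in sequentially. 0 \<le> j * p n * (1 - e n)"
    by eventually_elim simp
  have "(\<lambda>n. j * ((k n * p n - L n) * (1 - e n) - e n * L n)) \<longlonglongrightarrow> j * ((0::real) * (1 - 0) - 0)"
    by (intro tendsto_intros kp e)
  then show "(\<lambda>n. k n * (j * p n * (1 - e n)) - j * L n) \<longlonglongrightarrow> 0"
    by (simp add: algebra_simps)
  have "(\<lambda>n. j ^ 2 * (1 - e n) ^ 2 * ((k n * p n - L n) * p n + p n * L n))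
      \<longlonglongrightarrow> j ^ 2 * (1 - (0::real)) ^ 2 * (0 * 0 + 0)"
    by (intro tendsto_intros kp e p)
  then show "(\<lambda>n. k n * (j * p n * (1 - e n)) ^ 2) \<longlonglongrightarrow> 0"
    by (simp add: power2_eq_square algebra_simps)
qed

lemma power_floor_ln_times_exp_tendsto:
  fixes N e :: "nat \<Rightarrow> real" and c x :: real and j :: nat
  assumes N: "filterlim N at_top sequentially" and c: "c > 0"
    and e: "e \<longlonglongrightarrow> 0" "(\<lambda>n. e n * ln (N n)) \<longlonglongrightarrow> 0"
  shows "(\<lambda>n. (1 - j * (c / N n) * (1 - e n)) ^ nat \<lfloor>(ln (N n) + x) / (c / N n)\<rfloor>
              * exp (j * (ln (N n) + x))) \<longlonglongrightarrow> 1"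
proof (rule power_floor_div_times_exp_tendsto[where p = "\<lambda>n. c / N n" and L = "\<lambda>n. ln (N n) + x"])
  have "((\<lambda>m. c / m) \<longlongrightarrow> 0) at_top" "((\<lambda>m. c / m * (ln m + x)) \<longlongrightarrow> 0) at_top"
    by real_asymp+
  from this[THEN filterlim_compose, OF N]
  show "(\<lambda>n. c / N n) \<longlonglongrightarrow> 0" "(\<lambda>n. c / N n * (ln (N n) + x)) \<longlonglongrightarrow> 0"
    by simp_all
  show "e \<longlonglongrightarrow> 0"
    by (rule e(1))
  show "(\<lambda>n. e n * (ln (N n) + x)) \<longlonglongrightarrow> 0"
    using tendsto_add[OF e(2) tendsto_mult_right[OF e(1), of x]] by (simp add: algebra_simps)
  have "\<forall>\<^sub>F m in at_top. (0::real) \<le> ln m + x"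
    by real_asymp
  with eventually_gt_at_top[of "0::real"] have "\<forall>\<^sub>F m in at_top. 0 < c / m \<and> 0 \<le> ln m + x"
    by eventually_elim (use c in auto)
  then show "\<forall>\<^sub>F n in sequentially. 0 < c / N n \<and> 0 \<le> ln (N n) + x"
    by (rule eventually_compose_filterlim[OF _ N])
qed

lemma choose_div_power_tendsto: "(\<lambda>m. real (m choose j) / real m ^ j) \<longlonglongrightarrow> 1 / fact j"
proof -
  have "(\<lambda>m. (\<Prod>i<j. (real m - real i) / real m) / fact j) \<longlonglongrightarrow> (\<Prod>i<j. 1) / fact j"
  proof (intro tendsto_divide tendsto_prod tendsto_const)
    show "(\<lambda>m. (real m - real i) / real m) \<longlonglongrightarrow> 1" for i
      by real_asymp
  qed simp
  moreover have "(\<Prod>i<j. (real m - real i) / real m) / fact j = real (m choose j) / real m ^ j" for m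
    by (simp add: binomial_gbinomial gbinomial_prod_rev prod_dividef atLeast0LessThan)
  ultimately show ?thesis
    by simp
qed

lemma choose_times_power_tendsto:
  fixes N :: "nat \<Rightarrow> nat" and e :: "nat \<Rightarrow> real" and c x :: real
  assumes N: "filterlim N at_top sequentially" and c: "c > 0"
    and e: "e \<longlonglongrightarrow> 0" "(\<lambda>n. e n * ln (N n)) \<longlonglongrightarrow> 0"
  shows "(\<lambda>n. real (N n choose j) * (1 - j * (c / N n) * (1 - e n)) ^ nat \<lfloor>(ln (N n) + x) / (c / N n)\<rfloor>)
           \<longlonglongrightarrow> exp (- (j * x)) / fact j"
proof -
  let ?P = "\<lambda>n. (1 - j * (c / N n) * (1 - e n)) ^ nat \<lfloor>(ln (N n) + x) / (c / N n)\<rfloor>"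
  have RN: "filterlim (\<lambda>n. real (N n)) at_top sequentially"
    using N by (simp add: filterlim_sequentially_iff_filterlim_real)
  have "(\<lambda>n. real (N n choose j) / real (N n) ^ j * (?P n * exp (j * (ln (N n) + x))) * exp (- (j * x)))
      \<longlonglongrightarrow> 1 / fact j * 1 * exp (- (j * x))"
    by (intro tendsto_intros filterlim_compose[OF choose_div_power_tendsto N]
        power_floor_ln_times_exp_tendsto[OF RN c e])
  moreover have "\<forall>\<^sub>F n in sequentially.
      real (N n choose j) / real (N n) ^ j * (?P n * exp (j * (ln (N n) + x))) * exp (- (j * x))
      = real (N n choose j) * ?P n"
    using eventually_compose_filterlim[OF eventually_gt_at_top[of "0::real"] RN]
  proof eventually_elim
    case (elim n)
    then have "exp (j * (ln (N n) + x)) = real (N n) ^ j * exp (j * x)"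
      by (simp add: distrib_left exp_add exp_of_nat_mult)
    then show ?case
      using elim by (simp add: exp_minus)
  qed
  ultimately show ?thesis
    by (simp add: tendsto_cong)
qed

lemma filterlim_choose_at_top:
  assumes "1 \<le> s"
  shows "filterlim (\<lambda>n. n choose s) at_top sequentially"
  unfolding filterlim_sequentially_iff_filterlim_real
proof (rule filterlim_at_top_mono)
  show "filterlim (\<lambda>n. real n / real s) at_top sequentially"
    using assms by real_asymp
  show "\<forall>\<^sub>F n in sequentially. real n / real s \<le> real (n choose s)"
    using eventually_ge_at_top[of s]
  proof eventually_elim
    case (elim n)
    then have "real n / real s \<le> (real n / real s) ^ s"
      using assms by (intro self_le_power) auto
    also have "\<dots> \<le> real (n choose s)"
      using elim by (rule binomial_ge_n_over_k_pow_k)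
    finally show ?case .
  qed
qed

lemma ln_choose_div_tendsto: "(\<lambda>n. ln (real (n choose s)) / real n) \<longlonglongrightarrow> 0"
proof (rule tendsto_sandwich)
  show "\<forall>\<^sub>F n in sequentially. 0 \<le> ln (real (n choose s)) / real n"
    using eventually_ge_at_top[of s]
    by eventually_elim (intro divide_nonneg_nonneg ln_ge_zero, simp_all add: Suc_le_eq)
  show "\<forall>\<^sub>F n in sequentially. ln (real (n choose s)) / real n \<le> real s * ln (real n) / real n"
    using eventually_ge_at_top[of "max 1 s"]
  proof eventually_elim
    case (elim n)
    then have "ln (real (n choose s)) \<le> ln (real n ^ s)"
      by (subst ln_le_cancel_iff) (auto simp flip: of_nat_power intro: binomial_le_pow)
    then show ?case
      using elim by (simp add: ln_realpow divide_right_mono)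
  qed
  show "(\<lambda>n. real s * ln (real n) / real n) \<longlonglongrightarrow> 0"
    by real_asymp
qed simp

lemma ratio_times_ln_choose_tendsto:
  "(\<lambda>n. (real r - real s) / (real n - real s) * ln (real (n choose s))) \<longlonglongrightarrow> 0"
proof -
  have "(\<lambda>n. (real r - real s) * (real n / (real n - real s)) * (ln (real (n choose s)) / real n))
      \<longlonglongrightarrow> (real r - real s) * 1 * 0"
    by (intro tendsto_intros ln_choose_div_tendsto) real_asymp
  moreover have "\<forall>\<^sub>F n in sequentially.
      (real r - real s) * (real n / (real n - real s)) * (ln (real (n choose s)) / real n)
      = (real r - real s) / (real n - real s) * ln (real (n choose s))"
    using eventually_gt_at_top[of 0] by eventually_elim simp
  ultimately show ?thesis
    by (simp add: tendsto_cong)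
qed

lemma expectation_choose_card_uncollected_tendsto:
  fixes x :: real
  assumes "1 \<le> s" "s \<le> r"
  defines "k \<equiv> \<lambda>n. nat \<lfloor>real (n choose s) / real (r choose s) * ln (real (n choose s))
                      + real (n choose s) / real (r choose s) * x\<rfloor>"
  shows "(\<lambda>n. measure_pmf.expectation (rounds_pmf n r (k n))
              (\<lambda>H. real (card (uncollected n s (k n) H) choose j)))
           \<longlonglongrightarrow> exp (- (j * x)) / fact j"
proof -
  let ?E = "\<lambda>n. measure_pmf.expectation (rounds_pmf n r (k n))
              (\<lambda>H. real (card (uncollected n s (k n) H) choose j))"
  define c where "c = real (r choose s)"
  define d where "d n = (real r - real s) / (real n - real s)" for n
  have c: "c > 0"
    using assms(2) by (simp add: c_def)
  have N: "filterlim (\<lambda>n. n choose s) at_top sequentially"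
    using assms(1) by (rule filterlim_choose_at_top)
  have k: "k n = nat \<lfloor>(ln (real (n choose s)) + x) / (c / real (n choose s))\<rfloor>" for n
    by (simp add: k_def c_def add_divide_distrib algebra_simps)
  have "d \<longlonglongrightarrow> 0"
    unfolding d_def by real_asymp
  from tendsto_mult_left[OF this] tendsto_mult_left[OF ratio_times_ln_choose_tendsto]
  have "(\<lambda>n. j * d n) \<longlonglongrightarrow> 0" "(\<lambda>n. j * d n * ln (real (n choose s))) \<longlonglongrightarrow> 0"
    by (simp_all add: d_def mult.assoc)
  then have upper:
    "(\<lambda>n. real ((n choose s) choose j) * (1 - j * (c / real (n choose s)) * (1 - j * d n)) ^ k n)
      \<longlonglongrightarrow> exp (- (j * x)) / fact j"
    unfolding k by (rule choose_times_power_tendsto[OF N c])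
  have lower: "(\<lambda>n. real ((n choose s) choose j) * (1 - j * (c / real (n choose s)) * (1 - 0)) ^ k n)
      \<longlonglongrightarrow> exp (- (j * x)) / fact j"
    unfolding k using choose_times_power_tendsto[OF N c tendsto_const] by simp
  have "\<forall>\<^sub>F n in sequentially. j * c < real (n choose s)"
    using N by (simp add: filterlim_sequentially_iff_filterlim_real filterlim_at_top_dense)
  with eventually_gt_at_top[of r]
  have "\<forall>\<^sub>F n in sequentially.
      real ((n choose s) choose j) * (1 - j * (c / real (n choose s)) * (1 - 0)) ^ k n \<le> ?E n
      \<and> ?E n \<le> real ((n choose s) choose j) * (1 - j * (c / real (n choose s)) * (1 - j * d n)) ^ k n"
  proof eventually_elim
    case (elim n)
    moreover from elim c have "j * (c / real (n choose s)) \<le> 1"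
      using mult_nonneg_nonneg[of "real j" c] by (auto simp: divide_le_eq_1)
    ultimately show ?case
      using assms(2) expectation_choose_card_uncollected_bounds[where n=n and j=j and k="k n"]
      by (simp add: c_def d_def)
  qed
  then show ?thesis
    by (intro tendsto_sandwich[OF _ _ lower upper]) (auto elim: eventually_mono)
qed

section \<open>The Gumbel limit\<close>

lemma gumbel_cdf_sums: "(\<lambda>j. (-1) ^ j * (exp (- (real j * x)) / fact j)) sums gumbel_cdf x"
proof -
  have term_eq: "(- exp (- x)) ^ j /\<^sub>R fact j = (-1) ^ j * (exp (- (real j * x)) / fact j)" for j :: nat
  proof -
    have "exp (- (real j * x)) = exp (- x) ^ j"
      using exp_of_nat_mult[of j "- x"] by simp
    moreover have "(- exp (- x)) ^ j = (-1) ^ j * exp (- x) ^ j"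
      by (rule power_minus)
    ultimately show ?thesis
      by (simp only: real_scaleR_def divide_inverse mult_ac)
  qed
  show ?thesis
    using exp_converges[of "- exp (- x)"] unfolding term_eq gumbel_cdf_def .
qed

theorem theorem3:
  fixes r s :: nat
  assumes "1 \<le> s" and "s \<le> r"
  shows "weak_conv (T_norm_cdf r s) gumbel_cdf"
  unfolding weak_conv_def
proof (intro allI impI)
  fix x :: real
  define k where "k n = nat \<lfloor>real (n choose s) / real (r choose s) * ln (real (n choose s))
                      + real (n choose s) / real (r choose s) * x\<rfloor>" for n
  define M where "M n = rounds_pmf n r (k n)" for n
  define U where "U n H = card (uncollected n s (k n) H)" for n H
  have "T_norm_cdf r s n x = measure_pmf.prob (M n) {H. U n H = 0}" for n
    by (simp add: T_norm_cdf_def Let_def prob_T_le_def k_def M_def U_def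
        all_collected_by_iff_card_uncollected)
  moreover have "(\<lambda>n. measure_pmf.prob (M n) {H. U n H = 0}) \<longlonglongrightarrow> gumbel_cdf x"
  proof (rule tendsto_between_alternating_partial_sums[OF _ _ _ gumbel_cdf_sums])
    show "(\<lambda>n. measure_pmf.expectation (M n) (\<lambda>H. real (U n H choose j)))
        \<longlonglongrightarrow> exp (- (j * x)) / fact j" for j
      unfolding M_def U_def k_def using assms by (intro expectation_choose_card_uncollected_tendsto)
    have fin: "\<forall>\<^sub>F n in sequentially. finite (set_pmf (M n))"
      using eventually_ge_at_top[of r] by eventually_elim (simp add: M_def finite_set_pmf_rounds_pmf)
    show "\<forall>\<^sub>F n in sequentially.
        (\<Sum>j\<le>2 * L + 1. (-1) ^ j * measure_pmf.expectation (M n) (\<lambda>H. real (U n H choose j)))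
        \<le> measure_pmf.prob (M n) {H. U n H = 0}"
      for L using fin by eventually_elim (rule Bonferroni_prob_eq_0)
    show "\<forall>\<^sub>F n in sequentially. measure_pmf.prob (M n) {H. U n H = 0}
        \<le> (\<Sum>j\<le>2 * L. (-1) ^ j * measure_pmf.expectation (M n) (\<lambda>H. real (U n H choose j)))"
      for L using fin by eventually_elim (rule Bonferroni_prob_eq_0)
  qed
  ultimately show "(\<lambda>n. T_norm_cdf r s n x) \<longlonglongrightarrow> gumbel_cdf x"
    by simp
qed

end
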